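(* Let $r\ge2$, $\mathcal{X}=\{1,\dots,r\}$, $0<\eta<1$, $0<\epsilon<1$, and put $s=\Big\lfloor \dfrac{\log(1-\epsilon)}{2\log\eta}\Big\rfloor$. Consider the $k$-fold memoryless erasure channel $P_\eta(Y^k|X^k)$. Then: (i) for every $k\ge s$ there is a partition of $\mathcal{X}^k$ into exactly $r^{k-s}$ sets such that any two sequences in the same set differ in at most $s$ coordinates; (ii) consequently, for every $k\ge s$, the number of blocks of an $\epsilon$-reverse compression of $P_\eta(Y^k|X^k)$ satisfies $|\mathcal{P}^{(k)}_\epsilon|\le r^{k-s}$; (iii) the compressibilities $\Gamma^{(k)}_\epsilon$ of $P_\eta(Y^k|X^k)$ satisfy $\liminf_{k\to\infty}\Gamma^{(k)}_\epsilon\ \ge\ 1-r^{-s}$.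
   Context: Erasure channel: $\mathcal{Y}=\{1,\dots,r,\alpha\}$, $P_\eta(y|x)=(1-\eta)\delta_{x,y}+\eta\delta_{\alpha,y}$; its $k$-fold memoryless version is $P_\eta(y^k|x^k)=\prod_{i=1}^kP_\eta(y_i|x_i)$ on input alphabet $\mathcal{X}^k$. Fidelity of distributions: $F[P,Q]=[\sum_x\sqrt{P(x)Q(x)}]^2$. For a channel $P(Y|X)$ with finite input alphabet $\mathcal{X}$ and $\epsilon\in[0,1]$, an $\epsilon$-reverse compression is a partition $\mathcal{P}_\epsilon$ of $\mathcal{X}$ with the minimum possible number of blocks among all partitions such that any two inputs $x,x'$ in the same block satisfy $F[P(Y|x),P(Y|x')]\ge1-\epsilon$. The compressibility is $\Gamma_\epsilon=\frac{|\mathcal{X}|-|\mathcal{P}_\epsilon|}{|\mathcal{X}|-1}$ (for $|\mathcal{X}|\ge2$); $\Gamma^{(k)}_\epsilon$ denotes this quantity for the channel $P_\eta(Y^k|X^k)$ with input alphabet $\mathcal{X}^k$. *)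

theory Defs
  imports Complex_Main "HOL-Library.Disjoint_Sets" "HOL-Library.Extended_Real"
begin

definition fidelity :: "'y set \<Rightarrow> ('y \<Rightarrow> real) \<Rightarrow> ('y \<Rightarrow> real) \<Rightarrow> real" where
  "fidelity Y P Q = (\<Sum>y\<in>Y. sqrt (P y * Q y))^2"

definition eps_admissible ::
  "('x \<Rightarrow> 'y \<Rightarrow> real) \<Rightarrow> 'x set \<Rightarrow> 'y set \<Rightarrow> real \<Rightarrow> 'x set set \<Rightarrow> bool" where
  "eps_admissible W X Y eps \<P> \<longleftrightarrow> partition_on X \<P> \<and>
     (\<forall>B\<in>\<P>. \<forall>x\<in>B. \<forall>x'\<in>B. fidelity Y (W x) (W x') \<ge> 1 - eps)"

definition reverse_compression ::
  "('x \<Rightarrow> 'y \<Rightarrow> real) \<Rightarrow> 'x set \<Rightarrow> 'y set \<Rightarrow> real \<Rightarrow> 'x set set \<Rightarrow> bool" where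
  "reverse_compression W X Y eps \<P> \<longleftrightarrow> eps_admissible W X Y eps \<P> \<and>
     (\<forall>\<Q>. eps_admissible W X Y eps \<Q> \<longrightarrow> card \<P> \<le> card \<Q>)"

definition rc_blocks :: "('x \<Rightarrow> 'y \<Rightarrow> real) \<Rightarrow> 'x set \<Rightarrow> 'y set \<Rightarrow> real \<Rightarrow> nat" where
  "rc_blocks W X Y eps = (LEAST n. \<exists>\<P>. eps_admissible W X Y eps \<P> \<and> card \<P> = n)"

definition compressibility :: "('x \<Rightarrow> 'y \<Rightarrow> real) \<Rightarrow> 'x set \<Rightarrow> 'y set \<Rightarrow> real \<Rightarrow> real" where
  "compressibility W X Y eps =
     (real (card X) - real (rc_blocks W X Y eps)) / (real (card X) - 1)"

section \<open>The erasure channel; the erasure symbol alpha is None, symbol j is Some j\<close>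

definition erasure :: "real \<Rightarrow> nat \<Rightarrow> nat option \<Rightarrow> real" where
  "erasure \<eta> x y = (1 - \<eta>) * (if y = Some x then 1 else 0) + \<eta> * (if y = None then 1 else 0)"

definition erasure_k :: "real \<Rightarrow> nat list \<Rightarrow> nat option list \<Rightarrow> real" where
  "erasure_k \<eta> xs ys =
     (if length ys = length xs then (\<Prod>i<length xs. erasure \<eta> (xs ! i) (ys ! i)) else 0)"

definition inputs_k :: "nat \<Rightarrow> nat \<Rightarrow> nat list set" where
  "inputs_k r k = {xs. length xs = k \<and> set xs \<subseteq> {1..r}}"

definition outputs_k :: "nat \<Rightarrow> nat \<Rightarrow> nat option list set" where
  "outputs_k r k = {ys. length ys = k \<and> set ys \<subseteq> Some ` {1..r} \<union> {None}}"

definition hamming :: "'a list \<Rightarrow> 'a list \<Rightarrow> nat" where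
  "hamming xs ys = card {i. i < length xs \<and> xs ! i \<noteq> ys ! i}"

end

theory Submission imports Defs begin

text \<open>The Bhattacharyya coefficient of two erasure-channel outputs factorises over the coordinates,
  and each coordinate contributes 1 if the inputs agree there and \<open>\<eta>\<close> (the erasure event) otherwise;
  hence the fidelity of two input words is \<open>\<eta>\<close> raised to twice their Hamming distance. With
  \<open>s \<le> ln(1-\<epsilon>)/(2 ln \<eta>)\<close> this fidelity is at least \<open>1 - \<epsilon>\<close> whenever the words differ in at most \<open>s\<close>
  places. Grouping the words of length \<open>k\<close> by their last \<open>k - s\<close> letters gives an admissible partition
  with \<open>r^(k-s)\<close> blocks, so the compressibility is at least \<open>(r^k - r^(k-s))/(r^k - 1) \<ge> 1 - r^-s\<close>.\<close>

lemma outputs_k_0: "outputs_k r 0 = {[]}"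
  unfolding outputs_k_def by auto

lemma outputs_k_Suc:
  "outputs_k r (Suc k) = (\<lambda>(y, ys). y # ys) ` ((Some ` {1..r} \<union> {None}) \<times> outputs_k r k)"
proof
  show "outputs_k r (Suc k) \<subseteq> (\<lambda>(y, ys). y # ys) ` ((Some ` {1..r} \<union> {None}) \<times> outputs_k r k)"
  proof
    fix zs assume "zs \<in> outputs_k r (Suc k)"
    then obtain y ys where "zs = y # ys" "length ys = k" "y \<in> Some ` {1..r} \<union> {None}"
        "set ys \<subseteq> Some ` {1..r} \<union> {None}"
      unfolding outputs_k_def by (auto simp: length_Suc_conv)
    then show "zs \<in> (\<lambda>(y, ys). y # ys) ` ((Some ` {1..r} \<union> {None}) \<times> outputs_k r k)"
      unfolding outputs_k_def by force
  qed
qed (auto simp: outputs_k_def)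

lemma erasure_k_Cons: "erasure_k \<eta> (a # xs) (y # ys) = erasure \<eta> a y * erasure_k \<eta> xs ys"
  unfolding erasure_k_def by (simp del: prod.lessThan_Suc add: prod.lessThan_Suc_shift)

lemma hamming_Cons:
  assumes "length xs = length xs'"
  shows "hamming (a # xs) (b # xs') = (if a = b then 0 else 1) + hamming xs xs'"
proof -
  have "{i. i < length (a # xs) \<and> (a # xs) ! i \<noteq> (b # xs') ! i} =
        (if a = b then {} else {0}) \<union> Suc ` {i. i < length xs \<and> xs ! i \<noteq> xs' ! i}"
    (is "?L = ?R")
  proof (intro set_eqI iffI)
    fix i assume "i \<in> ?L" then show "i \<in> ?R" by (cases i) auto
  next
    fix i assume "i \<in> ?R" then show "i \<in> ?L" by (cases i) (auto split: if_splits)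
  qed
  then show ?thesis
    unfolding hamming_def by (auto simp: card_image card_insert_if)
qed

lemma sum_sqrt_erasure:
  assumes "0 \<le> \<eta>" "\<eta> \<le> 1" "a \<in> {1..r}" "b \<in> {1..r}"
  shows "(\<Sum>y\<in>Some ` {1..r} \<union> {None}. sqrt (erasure \<eta> a y * erasure \<eta> b y)) = (if a = b then 1 else \<eta>)"
proof -
  have "(\<Sum>y\<in>Some ` {1..r} \<union> {None}. sqrt (erasure \<eta> a y * erasure \<eta> b y))
      = (\<Sum>j\<in>{1..r}. sqrt (erasure \<eta> a (Some j) * erasure \<eta> b (Some j)))
        + sqrt (erasure \<eta> a None * erasure \<eta> b None)"
    by (subst sum.union_disjoint) (auto simp: sum.reindex inj_on_def)
  also have "(\<Sum>j\<in>{1..r}. sqrt (erasure \<eta> a (Some j) * erasure \<eta> b (Some j)))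
      = (\<Sum>j\<in>{1..r}. if j = a \<and> a = b then 1 - \<eta> else 0)"
    using assms by (intro sum.cong) (auto simp: erasure_def real_sqrt_mult[symmetric])
  finally show ?thesis
    using assms by (auto simp: erasure_def sum.delta')
qed

lemma sum_sqrt_erasure_k:
  assumes "0 \<le> \<eta>" "\<eta> \<le> 1"
    and "length xs' = length xs" "set xs \<subseteq> {1..r}" "set xs' \<subseteq> {1..r}"
  shows "(\<Sum>ys\<in>outputs_k r (length xs). sqrt (erasure_k \<eta> xs ys * erasure_k \<eta> xs' ys))
         = \<eta> ^ hamming xs xs'"
  using assms(3-)
proof (induction xs arbitrary: xs')
  case Nil
  then show ?case by (simp add: outputs_k_0 erasure_k_def hamming_def)
next
  case (Cons a xs)
  then obtain b zs where xs': "xs' = b # zs" and len: "length zs = length xs"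
    by (cases xs') auto
  let ?Y = "Some ` {1..r} \<union> {None}"
  let ?f = "\<lambda>y. sqrt (erasure \<eta> a y * erasure \<eta> b y)"
  let ?g = "\<lambda>ys. sqrt (erasure_k \<eta> xs ys * erasure_k \<eta> zs ys)"
  have "(\<Sum>ys\<in>outputs_k r (length (a # xs)). sqrt (erasure_k \<eta> (a # xs) ys * erasure_k \<eta> xs' ys))
      = (\<Sum>p\<in>?Y \<times> outputs_k r (length xs). ?f (fst p) * ?g (snd p))"
    by (simp add: outputs_k_Suc sum.reindex inj_on_def case_prod_beta xs' erasure_k_Cons
        real_sqrt_mult[symmetric] mult_ac)
  also have "\<dots> = sum ?f ?Y * sum ?g (outputs_k r (length xs))"
    by (subst sum_product, subst sum.cartesian_product, simp add: case_prod_beta)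
  also have "\<dots> = (if a = b then 1 else \<eta>) * \<eta> ^ hamming xs zs"
  proof -
    have "sum ?f ?Y = (if a = b then 1 else \<eta>)"
      using Cons.prems assms(1,2) xs' by (intro sum_sqrt_erasure) auto
    moreover have "sum ?g (outputs_k r (length xs)) = \<eta> ^ hamming xs zs"
      using Cons xs' len by auto
    ultimately show ?thesis by (simp only:)
  qed
  also have "\<dots> = \<eta> ^ hamming (a # xs) xs'"
    using xs' len by (simp add: hamming_Cons)
  finally show ?case .
qed

lemma fidelity_erasure_k:
  assumes "0 \<le> \<eta>" "\<eta> \<le> 1" "x \<in> inputs_k r k" "x' \<in> inputs_k r k"
  shows "fidelity (outputs_k r k) (erasure_k \<eta> x) (erasure_k \<eta> x') = \<eta> ^ (2 * hamming x x')"
  using assms sum_sqrt_erasure_k[OF assms(1,2), of x' x r]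
  by (simp add: fidelity_def inputs_k_def power_mult[symmetric] mult.commute)

lemma card_inputs_k: "card (inputs_k r k) = r ^ k"
proof -
  have "inputs_k r k = {xs. set xs \<subseteq> {1..r} \<and> length xs = k}"
    unfolding inputs_k_def by auto
  then show ?thesis by (simp add: card_lists_length_eq)
qed

lemma hamming_le_if_drop_eq:
  assumes "length xs = length ys" "drop s xs = drop s ys"
  shows "hamming xs ys \<le> s"
proof -
  have "{i. i < length xs \<and> xs ! i \<noteq> ys ! i} \<subseteq> {..<s}"
  proof (rule subsetI, rule ccontr)
    fix i assume i: "i \<in> {i. i < length xs \<and> xs ! i \<noteq> ys ! i}" and "i \<notin> {..<s}"
    then have "xs ! i = drop s xs ! (i - s)" "ys ! i = drop s ys ! (i - s)"
      using assms(1) by auto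
    then show False using i assms(2) by simp
  qed
  then show ?thesis
    unfolding hamming_def by (metis card_lessThan card_mono finite_lessThan)
qed

definition suffix_blocks :: "nat \<Rightarrow> nat \<Rightarrow> nat \<Rightarrow> nat list set set" where
  "suffix_blocks r k s = (\<lambda>v. {xs \<in> inputs_k r k. drop s xs = v}) ` inputs_k r (k - s)"

lemma replicate_append_in_suffix_block:
  assumes "s \<le> k" "1 \<le> r" "v \<in> inputs_k r (k - s)"
  shows "replicate s 1 @ v \<in> {xs \<in> inputs_k r k. drop s xs = v}"
  using assms unfolding inputs_k_def by auto

lemma partition_on_suffix_blocks:
  assumes "s \<le> k" "1 \<le> r"
  shows "partition_on (inputs_k r k) (suffix_blocks r k s)"
proof (rule partition_onI)
  show "\<Union> (suffix_blocks r k s) = inputs_k r k"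
  proof (intro equalityI subsetI)
    fix x assume x: "x \<in> inputs_k r k"
    then have "drop s x \<in> inputs_k r (k - s)"
      unfolding inputs_k_def by (auto dest: in_set_dropD)
    with x show "x \<in> \<Union> (suffix_blocks r k s)"
      unfolding suffix_blocks_def by blast
  qed (auto simp: suffix_blocks_def)
  show "{} \<notin> suffix_blocks r k s"
    using replicate_append_in_suffix_block[OF assms] unfolding suffix_blocks_def by blast
  show "disjnt p q" if "p \<in> suffix_blocks r k s" "q \<in> suffix_blocks r k s" "p \<noteq> q" for p q
    using that unfolding suffix_blocks_def disjnt_def by auto
qed

lemma card_suffix_blocks:
  assumes "s \<le> k" "1 \<le> r"
  shows "card (suffix_blocks r k s) = r ^ (k - s)"
proof -
  have "inj_on (\<lambda>v. {xs \<in> inputs_k r k. drop s xs = v}) (inputs_k r (k - s))"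
  proof (rule inj_onI)
    fix v w assume "v \<in> inputs_k r (k - s)" "w \<in> inputs_k r (k - s)"
      and "{xs \<in> inputs_k r k. drop s xs = v} = {xs \<in> inputs_k r k. drop s xs = w}"
    then show "v = w"
      using replicate_append_in_suffix_block[OF assms] by (metis (mono_tags, lifting) mem_Collect_eq)
  qed
  then show ?thesis
    unfolding suffix_blocks_def by (simp add: card_image card_inputs_k)
qed

lemma hamming_le_in_suffix_block:
  assumes "B \<in> suffix_blocks r k s" "x \<in> B" "x' \<in> B"
  shows "hamming x x' \<le> s"
  using assms by (intro hamming_le_if_drop_eq) (auto simp: suffix_blocks_def inputs_k_def)

lemma card_le_if_partition_on:
  assumes "finite A" "partition_on A \<P>"
  shows "card \<P> \<le> card A"
proof -
  have "finite p" "1 \<le> card p" if "p \<in> \<P>" for p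
  proof -
    have "p \<subseteq> A" using that partition_onD1[OF assms(2)] by blast
    then show "finite p" using assms(1) finite_subset by blast
    moreover have "p \<noteq> {}" using that partition_onD3[OF assms(2)] by blast
    ultimately show "1 \<le> card p" by (simp add: Suc_le_eq card_gt_0_iff)
  qed
  then have "(\<Sum>p\<in>\<P>. 1) \<le> (\<Sum>p\<in>\<P>. card p)"
    by (intro sum_mono)
  then show ?thesis
    using product_partition[OF assms(2)] \<open>\<And>p. p \<in> \<P> \<Longrightarrow> finite p\<close> by simp
qed

lemma card_le_if_reverse_compression:
  "reverse_compression W X Y eps \<P> \<Longrightarrow> eps_admissible W X Y eps \<Q> \<Longrightarrow> card \<P> \<le> card \<Q>"
  unfolding reverse_compression_def by blast

lemma rc_blocks_le_card:
  "eps_admissible W X Y eps \<Q> \<Longrightarrow> rc_blocks W X Y eps \<le> card \<Q>"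
  unfolding rc_blocks_def by (rule Least_le) blast

lemma compressibility_ge:
  assumes "eps_admissible W X Y eps \<Q>" "card X \<ge> 2"
  shows "1 - real (card \<Q>) / real (card X) \<le> compressibility W X Y eps"
proof -
  define N where "N = real (card X)"
  have "real (card \<Q>) \<le> N"
    using assms card_le_if_partition_on[of X \<Q>] unfolding N_def eps_admissible_def
    by (metis card.infinite not_numeral_le_zero of_nat_le_iff)
  then have "1 - real (card \<Q>) / N \<le> (N - real (card \<Q>)) / (N - 1)"
    using assms(2) unfolding N_def by (simp add: field_simps)
  also have "\<dots> \<le> compressibility W X Y eps"
    using rc_blocks_le_card[OF assms(1)] assms(2)
    unfolding compressibility_def N_def by (intro divide_right_mono) auto
  finally show ?thesis unfolding N_def .
qed

lemma erasure_k_admissible_if_hamming_le: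
  assumes "0 < \<eta>" "\<eta> < 1" "1 - \<epsilon> \<le> \<eta> ^ (2 * s)"
    and "partition_on (inputs_k r k) \<P>" "\<forall>B\<in>\<P>. \<forall>x\<in>B. \<forall>x'\<in>B. hamming x x' \<le> s"
  shows "eps_admissible (erasure_k \<eta>) (inputs_k r k) (outputs_k r k) \<epsilon> \<P>"
  unfolding eps_admissible_def
proof (rule conjI[OF assms(4)], intro ballI)
  fix B x x' assume B: "B \<in> \<P>" and x: "x \<in> B" "x' \<in> B"
  then have "x \<in> inputs_k r k" "x' \<in> inputs_k r k"
    using assms(4) by (auto simp: partition_on_def)
  then have "fidelity (outputs_k r k) (erasure_k \<eta> x) (erasure_k \<eta> x') = \<eta> ^ (2 * hamming x x')"
    using assms(1,2) by (intro fidelity_erasure_k) auto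
  moreover have "\<eta> ^ (2 * s) \<le> \<eta> ^ (2 * hamming x x')"
    using assms(1,2,5) B x by (intro power_decreasing) auto
  ultimately show "1 - \<epsilon> \<le> fidelity (outputs_k r k) (erasure_k \<eta> x) (erasure_k \<eta> x')"
    using assms(3) by linarith
qed

lemma one_minus_le_power_floor:
  fixes \<eta> \<epsilon> :: real
  assumes "0 < \<eta>" "\<eta> < 1" "0 < \<epsilon>" "\<epsilon> < 1"
    and "s = nat \<lfloor>ln (1 - \<epsilon>) / (2 * ln \<eta>)\<rfloor>"
  shows "1 - \<epsilon> \<le> \<eta> ^ (2 * s)"
proof -
  define L where "L = ln (1 - \<epsilon>) / (2 * ln \<eta>)"
  have ln_\<eta>: "ln \<eta> < 0" and "ln (1 - \<epsilon>) < 0"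
    using assms by auto
  then have "L > 0" unfolding L_def by (simp add: divide_neg_neg)
  then have "real s \<le> L" unfolding assms(5) L_def[symmetric] by linarith
  then have "ln (1 - \<epsilon>) \<le> 2 * real s * ln \<eta>"
    using ln_\<eta> unfolding L_def by (simp add: field_simps)
  also have "\<dots> = ln (\<eta> ^ (2 * s))"
    using assms(1) by (simp add: ln_realpow)
  finally show ?thesis
    using assms(1-4) by simp
qed

lemma suffix_blocks_admissible:
  assumes "1 \<le> r" "0 < \<eta>" "\<eta> < 1" "1 - \<epsilon> \<le> \<eta> ^ (2 * s)" "s \<le> k"
  shows "eps_admissible (erasure_k \<eta>) (inputs_k r k) (outputs_k r k) \<epsilon> (suffix_blocks r k s)"
  using assms(2-4) partition_on_suffix_blocks[OF assms(5,1)]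
  by (rule erasure_k_admissible_if_hamming_le) (blast intro: hamming_le_in_suffix_block)

lemma compressibility_erasure_k_ge:
  assumes "2 \<le> r" "0 < \<eta>" "\<eta> < 1" "1 - \<epsilon> \<le> \<eta> ^ (2 * s)" "s \<le> k" "1 \<le> k"
  shows "1 - 1 / real r ^ s \<le> compressibility (erasure_k \<eta>) (inputs_k r k) (outputs_k r k) \<epsilon>"
proof -
  have card: "card (inputs_k r k) \<ge> 2"
    using assms(1,6) self_le_power[of r k] by (simp add: card_inputs_k)
  have "real r ^ k = real r ^ (k - s) * real r ^ s"
    using assms(5) by (simp flip: power_add)
  then have ratio: "real r ^ (k - s) / real r ^ k = 1 / real r ^ s"
    using assms(1) by simp
  have "1 - real r ^ (k - s) / real r ^ k
      \<le> compressibility (erasure_k \<eta>) (inputs_k r k) (outputs_k r k) \<epsilon>"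
    using compressibility_ge[OF suffix_blocks_admissible[OF _ assms(2-5)] card]
      card_suffix_blocks[OF assms(5)] assms(1)
    by (simp add: card_inputs_k)
  then show ?thesis unfolding ratio .
qed

theorem mainTheorem5:
  fixes r :: nat and \<eta> \<epsilon> :: real and s :: nat
  assumes "r \<ge> 2" and "0 < \<eta>" and "\<eta> < 1" and "0 < \<epsilon>" and "\<epsilon> < 1"
    and s_def: "s = nat \<lfloor>ln (1 - \<epsilon>) / (2 * ln \<eta>)\<rfloor>"
  shows "(\<forall>k\<ge>s. \<exists>\<P>. partition_on (inputs_k r k) \<P> \<and> card \<P> = r ^ (k - s) \<and>
            (\<forall>B\<in>\<P>. \<forall>x\<in>B. \<forall>x'\<in>B. hamming x x' \<le> s))
       \<and> (\<forall>k\<ge>s. \<forall>\<P>. reverse_compression (erasure_k \<eta>) (inputs_k r k) (outputs_k r k) \<epsilon> \<P>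
                 \<longrightarrow> card \<P> \<le> r ^ (k - s))
       \<and> liminf (\<lambda>k. ereal (compressibility (erasure_k \<eta>) (inputs_k r k) (outputs_k r k) \<epsilon>))
           \<ge> ereal (1 - 1 / real r ^ s)"
proof -
  have threshold: "1 - \<epsilon> \<le> \<eta> ^ (2 * s)"
    using assms(2-6) by (rule one_minus_le_power_floor)
  have r: "1 \<le> r" using assms(1) by simp
  have "\<exists>\<P>. partition_on (inputs_k r k) \<P> \<and> card \<P> = r ^ (k - s) \<and>
      (\<forall>B\<in>\<P>. \<forall>x\<in>B. \<forall>x'\<in>B. hamming x x' \<le> s)" if "s \<le> k" for k
    using partition_on_suffix_blocks[OF that r] card_suffix_blocks[OF that r]
      hamming_le_in_suffix_block[of _ r k s]
    by blast
  moreover have "card \<P> \<le> r ^ (k - s)"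
    if "s \<le> k" "reverse_compression (erasure_k \<eta>) (inputs_k r k) (outputs_k r k) \<epsilon> \<P>" for k \<P>
    using card_le_if_reverse_compression[OF that(2)
        suffix_blocks_admissible[OF r assms(2,3) threshold that(1)]]
    by (simp add: card_suffix_blocks[OF that(1) r])
  moreover have "liminf (\<lambda>k. ereal (compressibility (erasure_k \<eta>) (inputs_k r k) (outputs_k r k) \<epsilon>))
      \<ge> ereal (1 - 1 / real r ^ s)"
    using compressibility_erasure_k_ge[OF assms(1-3) threshold]
    by (intro Liminf_bounded eventually_mono[OF eventually_ge_at_top[of "max s 1"]]) simp
  ultimately show ?thesis
    by blast
qed

end
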